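(* Let $\lambda\in\mathbb R$ with $\alpha=1-\lambda>0$, and let $\mathcal Q_\lambda$ be a $\lambda$-exponential family satisfying Assumptions A and B. Let $x_1,\dots,x_N\in\mathcal X$ be data such that $x_i\in S_\vartheta$ for all $i$ and all $\vartheta\in\operatorname{dom}\varphi_\lambda$. Set $\bar T=\frac1N\sum_{i=1}^NT(x_i)$ and suppose there exists $\vartheta_*\in\operatorname{dom}\varphi_\lambda$ with $q^{(\alpha)}_{\vartheta_*}(T)=\bar T$. Let $\ell(\vartheta)=\sum_{i=1}^N\log q_\vartheta(x_i)$. (i) If $\lambda=0$, $\vartheta_*$ maximizes $\ell$ over $\operatorname{dom}\varphi_\lambda$. (ii) If $\lambda<0$, $\vartheta_*$ maximizes over $\operatorname{dom}\varphi_\lambda$ the function $\vartheta\mapsto N\big(c_\lambda(\vartheta,\bar T)-\varphi_\lambda(\vartheta)\big)$, which is a lower bound of $\ell$ on $\operatorname{dom}\varphi_\lambda$; moreover $\frac1N\sum_{i=1}^N\log q_{\vartheta_*}(x_i)\ge\psi_\lambda(\vartheta_* )$. (iii) If $\lambda>0$, $\vartheta_*$ maximizes over $\operatorname{dom}\varphi_\lambda$ the function $\vartheta\mapsto N\big(c_\lambda(\vartheta,\bar T)-\varphi_\lambda(\vartheta)\big)$, which is an upper bound of $\ell$ on $\operatorname{dom}\varphi_\lambda$; moreover $\frac1N\sum_{i=1}^N\log q_\vartheta(x_i)\le\psi_\lambda(\vartheta_* )$ for all $\vartheta\in\operatorname{dom}\varphi_\lambda$.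
   Context: $\mathcal H$ is a finite-dimensional real Hilbert space; $\mathcal X$ a measurable space with measure $m$; $p(f)=\int fp\,dm$. Conventions $\log s=-\infty$ for $s\le0$, $\exp(-\infty)=0$. Coupling $c_\lambda(u,v)=\frac1\lambda\log(1+\lambda\langle u,v\rangle)$ ($\lambda\ne0$), $c_0=\langle\cdot,\cdot\rangle$. For measurable $T:\mathcal X\to\mathcal H$: $\varphi_\lambda(\vartheta)=\log\int\exp(c_\lambda(\vartheta,T))dm$, $\operatorname{dom}\varphi_\lambda=\{\varphi_\lambda<+\infty\}$, $q_\vartheta=\exp(c_\lambda(\vartheta,T)-\varphi_\lambda(\vartheta))$, $\mathcal Q_\lambda=\{q_\vartheta:\vartheta\in\operatorname{dom}\varphi_\lambda\}$, support $S_\vartheta=\{x:1+\lambda\langle\vartheta,T(x)\rangle>0\}$. Escort $p^{(\alpha)}=p^\alpha/\int p^\alpha dm$; $p_{|Y}=p\mathbf 1_Y$. Rényi entropy $H_\alpha(p)=\frac1{1-\alpha}\log\int p^\alpha dm$ ($\alpha\ne1$), $H_1(p)=-\int p\log p\,dm$; $\psi_\lambda(\vartheta)=-H_\alpha(q_\vartheta)$. Compatibility: $p$ is $q_\vartheta$-compatible if $\int p_{|S_\vartheta}^\alpha dm\in(0,\infty)$ and $\int Tp_{|S_\vartheta}^\alpha dm$ has finite components; $\mathcal Q_\lambda$-compatible if for every $\vartheta\in\operatorname{dom}\varphi_\lambda$. Assumption A: $\alpha>0$ and $\varphi_\lambda$ proper (never $-\infty$, nonempty domain). Assumption B: there is a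 nonempty $S_\lambda$ with $S_\vartheta=S_\lambda$ for all $\vartheta\in\operatorname{dom}\varphi_\lambda$, and each $q_\vartheta\in\mathcal Q_\lambda$ is $\mathcal Q_\lambda$-compatible. *)

theory Defs
  imports "HOL-Probability.Probability"
begin

definition elog :: "real \<Rightarrow> ereal" where
  "elog s = (if s > 0 then ereal (ln s) else -\<infinity>)"

text \<open>Exponential with exp(-infinity) = 0 (the value at +infinity is never used).\<close>
definition eexp :: "ereal \<Rightarrow> real" where
  "eexp x = (case x of ereal r \<Rightarrow> exp r | _ \<Rightarrow> 0)"

definition coupling :: "real \<Rightarrow> 'h::real_inner \<Rightarrow> 'h \<Rightarrow> ereal" where
  "coupling lam u v =
     (if lam = 0 then ereal (inner u v)
      else if 1 + lam * inner u v > 0 then ereal (ln (1 + lam * inner u v) / lam)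
      else -\<infinity>)"

definition phi :: "real \<Rightarrow> 'a measure \<Rightarrow> ('a \<Rightarrow> 'h::real_inner) \<Rightarrow> 'h \<Rightarrow> ereal" where
  "phi lam M T \<theta> =
     (let Z = (\<integral>\<^sup>+ x. ennreal (eexp (coupling lam \<theta> (T x))) \<partial>M)
      in if Z = \<infinity> then \<infinity> else elog (enn2real Z))"

definition dom_phi :: "real \<Rightarrow> 'a measure \<Rightarrow> ('a \<Rightarrow> 'h::real_inner) \<Rightarrow> 'h set" where
  "dom_phi lam M T = {\<theta>. phi lam M T \<theta> < \<infinity>}"

definition qdens :: "real \<Rightarrow> 'a measure \<Rightarrow> ('a \<Rightarrow> 'h::real_inner) \<Rightarrow> 'h \<Rightarrow> 'a \<Rightarrow> real" where
  "qdens lam M T \<theta> x = eexp (coupling lam \<theta> (T x) - phi lam M T \<theta>)"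

definition supp :: "real \<Rightarrow> ('a \<Rightarrow> 'h::real_inner) \<Rightarrow> 'h \<Rightarrow> 'a set" where
  "supp lam T \<theta> = {x. 1 + lam * inner \<theta> (T x) > 0}"

text \<open>p(f) = integral of f p dm.\<close>
definition expect :: "'a measure \<Rightarrow> ('a \<Rightarrow> real) \<Rightarrow> ('a \<Rightarrow> 'h::euclidean_space) \<Rightarrow> 'h" where
  "expect M p f = (\<integral>x. p x *\<^sub>R f x \<partial>M)"

definition escort :: "real \<Rightarrow> 'a measure \<Rightarrow> ('a \<Rightarrow> real) \<Rightarrow> 'a \<Rightarrow> real" where
  "escort \<alpha> M p = (\<lambda>x. p x powr \<alpha> / enn2real (\<integral>\<^sup>+ y. ennreal (p y powr \<alpha>) \<partial>M))"

definition restr :: "('a \<Rightarrow> real) \<Rightarrow> 'a set \<Rightarrow> 'a \<Rightarrow> real" where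
  "restr p Y = (\<lambda>x. p x * indicator Y x)"

text \<open>Renyi entropy (real valued; the integrals are finite under compatibility).\<close>
definition renyi :: "real \<Rightarrow> 'a measure \<Rightarrow> ('a \<Rightarrow> real) \<Rightarrow> real" where
  "renyi \<alpha> M p =
     (if \<alpha> = 1 then - (\<integral>x. p x * ln (p x) \<partial>M)
      else ln (enn2real (\<integral>\<^sup>+ x. ennreal (p x powr \<alpha>) \<partial>M)) / (1 - \<alpha>))"

definition psi :: "real \<Rightarrow> 'a measure \<Rightarrow> ('a \<Rightarrow> 'h::real_inner) \<Rightarrow> 'h \<Rightarrow> real" where
  "psi lam M T \<theta> = - renyi (1 - lam) M (qdens lam M T \<theta>)"

definition compatible ::
  "real \<Rightarrow> 'a measure \<Rightarrow> ('a \<Rightarrow> 'h::euclidean_space) \<Rightarrow> ('a \<Rightarrow> real) \<Rightarrow> 'h \<Rightarrow> bool" where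
  "compatible lam M T p \<theta> \<longleftrightarrow>
     (let \<alpha> = 1 - lam; pS = restr p (supp lam T \<theta>) in
       0 < (\<integral>\<^sup>+ x. ennreal (pS x powr \<alpha>) \<partial>M) \<and>
       (\<integral>\<^sup>+ x. ennreal (pS x powr \<alpha>) \<partial>M) < \<infinity> \<and>
       (\<forall>b\<in>Basis. integrable M (\<lambda>x. pS x powr \<alpha> * inner (T x) b)))"

definition family_compatible ::
  "real \<Rightarrow> 'a measure \<Rightarrow> ('a \<Rightarrow> 'h::euclidean_space) \<Rightarrow> ('a \<Rightarrow> real) \<Rightarrow> bool" where
  "family_compatible lam M T p \<longleftrightarrow> (\<forall>\<theta>\<in>dom_phi lam M T. compatible lam M T p \<theta>)"

definition assumption_A :: "real \<Rightarrow> 'a measure \<Rightarrow> ('a \<Rightarrow> 'h::real_inner) \<Rightarrow> bool" where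
  "assumption_A lam M T \<longleftrightarrow> 1 - lam > 0 \<and>
     (\<forall>\<theta>. phi lam M T \<theta> \<noteq> -\<infinity>) \<and> dom_phi lam M T \<noteq> {}"

definition assumption_B :: "real \<Rightarrow> 'a measure \<Rightarrow> ('a \<Rightarrow> 'h::euclidean_space) \<Rightarrow> bool" where
  "assumption_B lam M T \<longleftrightarrow>
     (\<exists>S. S \<noteq> {} \<and> (\<forall>\<theta>\<in>dom_phi lam M T. supp lam T \<theta> = S)) \<and>
     (\<forall>\<theta>\<in>dom_phi lam M T. family_compatible lam M T (qdens lam M T \<theta>))"

end

(*
  Write Z(theta) = exp phi(theta) for the partition function and a(theta) = 1 + lambda <theta, Tbar>.
  The surrogate c(theta, Tbar) - phi(theta) is maximised at theta_s: the tangent inequality of the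
  convex map y |-> y powr (1/lambda) (of exp when lambda = 0) at the point
  (a(theta) / a(theta_s)) (1 + lambda <theta_s, T x>), integrated against the unnormalised escort
  density of q_theta_s, has a linear term that the moment condition makes vanish, and what remains is
  Z(theta) >= (a(theta) / a(theta_s)) powr (1/lambda) Z(theta_s).
  The log-likelihood equals sum_i c(theta, T x_i) - N phi(theta), and c(theta, .) is concave for
  lambda > 0, affine for lambda = 0 and convex for lambda < 0, so Jensen's inequality compares it with
  N times the surrogate. Finally the escort normaliser is Z(theta_s) powr lambda / a(theta_s), which
  identifies psi(theta_s) with the surrogate at theta_s.
*)

theory Submission
  imports Defs
begin

section \<open>Partition function and log-densities\<close>

lemma eexp_coupling:
  "eexp (coupling lam \<theta> v) = (if lam = 0 then exp (\<theta> \<bullet> v)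
     else if 1 + lam * (\<theta> \<bullet> v) > 0 then (1 + lam * (\<theta> \<bullet> v)) powr (1 / lam) else 0)"
  by (auto simp: coupling_def eexp_def powr_def)

lemma eexp_coupling_nonneg: "eexp (coupling lam \<theta> v) \<ge> 0"
  by (auto simp: coupling_def eexp_def)

lemma borel_measurable_eexp_coupling [measurable]:
  fixes T :: "'a \<Rightarrow> 'h::euclidean_space"
  assumes [measurable]: "T \<in> borel_measurable M"
  shows "(\<lambda>x. eexp (coupling lam \<theta> (T x))) \<in> borel_measurable M"
  unfolding eexp_coupling by (cases "lam = 0") simp_all

definition partition_function ::
    "real \<Rightarrow> 'a measure \<Rightarrow> ('a \<Rightarrow> 'h::real_inner) \<Rightarrow> 'h \<Rightarrow> real" where
  "partition_function lam M T \<theta> = (\<integral>x. eexp (coupling lam \<theta> (T x)) \<partial>M)"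

lemma dom_phi_partition_function:
  fixes T :: "'a \<Rightarrow> 'h::euclidean_space"
  assumes [measurable]: "T \<in> borel_measurable M"
    and "\<theta> \<in> dom_phi lam M T" and "phi lam M T \<theta> \<noteq> -\<infinity>"
  shows integrable_eexp_coupling: "integrable M (\<lambda>x. eexp (coupling lam \<theta> (T x)))"
    and partition_function_pos: "partition_function lam M T \<theta> > 0"
    and phi_eq_ln_partition_function: "phi lam M T \<theta> = ereal (ln (partition_function lam M T \<theta>))"
proof -
  define Z where "Z = (\<integral>\<^sup>+ x. ennreal (eexp (coupling lam \<theta> (T x))) \<partial>M)"
  have phi: "phi lam M T \<theta> = (if Z = \<infinity> then \<infinity> else elog (enn2real Z))"
    by (simp add: phi_def Z_def Let_def)
  have Z_finite: "Z \<noteq> \<infinity>"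
    using assms(2) phi by (auto simp: dom_phi_def)
  have Z_eq: "partition_function lam M T \<theta> = enn2real Z"
    unfolding Z_def partition_function_def
    by (rule integral_eq_nn_integral) (auto intro: eexp_coupling_nonneg)
  have Z_pos: "enn2real Z > 0"
    using assms(3) phi Z_finite by (auto simp: elog_def split: if_splits)
  show "integrable M (\<lambda>x. eexp (coupling lam \<theta> (T x)))"
    using Z_finite
    by (intro integrableI_nn_integral_finite[where x="enn2real Z"])
       (auto intro: eexp_coupling_nonneg simp: Z_def[symmetric] less_top[symmetric] ennreal_enn2real)
  show "partition_function lam M T \<theta> > 0"
    using Z_eq Z_pos by simp
  show "phi lam M T \<theta> = ereal (ln (partition_function lam M T \<theta>))"
    using phi Z_finite Z_pos Z_eq by (simp add: elog_def)
qed

lemma qdens_eq_divide_partition_function: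
  assumes "phi lam M T \<theta> = ereal (ln (partition_function lam M T \<theta>))"
    and "partition_function lam M T \<theta> > 0"
  shows "qdens lam M T \<theta> x = eexp (coupling lam \<theta> (T x)) / partition_function lam M T \<theta>"
  using assms by (auto simp: qdens_def coupling_def eexp_def exp_diff)

lemma restr_qdens_supp:
  assumes "phi lam M T \<theta> \<noteq> -\<infinity>"
  shows "restr (qdens lam M T \<theta>) (supp lam T \<theta>) = qdens lam M T \<theta>"
  using assms
  by (cases "phi lam M T \<theta>")
     (auto simp: fun_eq_iff restr_def supp_def qdens_def coupling_def eexp_def indicator_def)

definition coupling_real :: "real \<Rightarrow> real \<Rightarrow> real" where
  "coupling_real lam s = (if lam = 0 then s else ln (1 + lam * s) / lam)"

lemma coupling_eq_coupling_real:
  "1 + lam * (u \<bullet> v) > 0 \<Longrightarrow> coupling lam u v = ereal (coupling_real lam (u \<bullet> v))"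
  by (simp add: coupling_def coupling_real_def)

lemma ln_qdens:
  assumes "phi lam M T \<theta> = ereal f" and "x \<in> supp lam T \<theta>"
  shows "ln (qdens lam M T \<theta> x) = coupling_real lam (\<theta> \<bullet> T x) - f"
  using assms by (simp add: qdens_def supp_def coupling_eq_coupling_real eexp_def)

section \<open>Log-likelihood versus the surrogate\<close>

lemma sum_ln_le_card_mult_ln_mean:
  fixes u :: "'i \<Rightarrow> real"
  assumes "finite K" "K \<noteq> {}" and "\<And>i. i \<in> K \<Longrightarrow> u i > 0"
  shows "(\<Sum>i\<in>K. ln (u i)) \<le> card K * ln ((\<Sum>i\<in>K. u i) / card K)"
proof -
  have "(\<Sum>i\<in>K. (1 / card K) * ln (u i)) \<le> ln (\<Sum>i\<in>K. (1 / card K) *\<^sub>R u i)"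
    using assms by (intro concave_on_sum[OF _ _ ln_concave]) auto
  then show ?thesis
    using assms by (simp add: sum_divide_distrib[symmetric] divide_simps card_gt_0_iff mult.commute)
qed

lemma sum_coupling_real_le:
  fixes s :: "'i \<Rightarrow> real"
  assumes "finite K" "K \<noteq> {}" "lam \<ge> 0" and "\<And>i. i \<in> K \<Longrightarrow> 1 + lam * s i > 0"
  shows "(\<Sum>i\<in>K. coupling_real lam (s i)) \<le> card K * coupling_real lam ((\<Sum>i\<in>K. s i) / card K)"
proof (cases "lam = 0")
  case False
  have mean: "(\<Sum>i\<in>K. 1 + lam * s i) / card K = 1 + lam * ((\<Sum>i\<in>K. s i) / card K)"
    using assms by (simp add: sum.distrib sum_distrib_left[symmetric] field_simps card_gt_0_iff)
  have "(\<Sum>i\<in>K. ln (1 + lam * s i)) / lam \<le> card K * ln (1 + lam * ((\<Sum>i\<in>K. s i) / card K)) / lam"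
    using sum_ln_le_card_mult_ln_mean[of K "\<lambda>i. 1 + lam * s i"] assms False mean
    by (intro divide_right_mono) auto
  then show ?thesis
    using False by (simp add: coupling_real_def sum_divide_distrib)
qed (use assms in \<open>simp add: coupling_real_def card_gt_0_iff\<close>)

lemma sum_coupling_real_ge:
  fixes s :: "'i \<Rightarrow> real"
  assumes "finite K" "K \<noteq> {}" "lam \<le> 0" and "\<And>i. i \<in> K \<Longrightarrow> 1 + lam * s i > 0"
  shows "card K * coupling_real lam ((\<Sum>i\<in>K. s i) / card K) \<le> (\<Sum>i\<in>K. coupling_real lam (s i))"
proof (cases "lam = 0")
  case False
  have mean: "(\<Sum>i\<in>K. 1 + lam * s i) / card K = 1 + lam * ((\<Sum>i\<in>K. s i) / card K)"
    using assms by (simp add: sum.distrib sum_distrib_left[symmetric] field_simps card_gt_0_iff)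
  have "card K * ln (1 + lam * ((\<Sum>i\<in>K. s i) / card K)) / lam \<le> (\<Sum>i\<in>K. ln (1 + lam * s i)) / lam"
    using sum_ln_le_card_mult_ln_mean[of K "\<lambda>i. 1 + lam * s i"] assms False mean
    by (intro divide_right_mono_neg) auto
  then show ?thesis
    using False by (simp add: coupling_real_def sum_divide_distrib)
qed (use assms in \<open>simp add: coupling_real_def card_gt_0_iff\<close>)

lemma sum_ln_qdens:
  fixes f :: real
  assumes "phi lam M T \<theta> = ereal f" and "\<And>i. i \<in> K \<Longrightarrow> xs i \<in> supp lam T \<theta>"
  shows "(\<Sum>i\<in>K. ln (qdens lam M T \<theta> (xs i)))
       = (\<Sum>i\<in>K. coupling_real lam (\<theta> \<bullet> T (xs i))) - real (card K) * f"
  using assms by (simp add: ln_qdens sum_subtractf)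

lemma surrogate_at_mean:
  fixes T :: "'a \<Rightarrow> 'h::real_inner"
  assumes "phi lam M T \<theta> = ereal f" "N > 0" and "\<And>i. i < N \<Longrightarrow> xs i \<in> supp lam T \<theta>"
  shows "ereal (real N)
         * (coupling lam \<theta> ((1 / real N) *\<^sub>R (\<Sum>i<N. T (xs i))) - phi lam M T \<theta>)
       = ereal (real N * coupling_real lam ((\<Sum>i<N. \<theta> \<bullet> T (xs i)) / real N) - real N * f)"
proof -
  have inner_mean: "\<theta> \<bullet> ((1 / real N) *\<^sub>R (\<Sum>i<N. T (xs i))) = (\<Sum>i<N. \<theta> \<bullet> T (xs i)) / real N"
    by (simp add: inner_sum_right)
  have "(\<Sum>i<N. 1 + lam * (\<theta> \<bullet> T (xs i))) / real N > 0"
    using assms(2,3) by (intro divide_pos_pos sum_pos) (auto simp: supp_def)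
  then have "1 + lam * (\<theta> \<bullet> ((1 / real N) *\<^sub>R (\<Sum>i<N. T (xs i)))) > 0"
    using assms(2) unfolding inner_mean by (simp add: sum.distrib sum_distrib_left[symmetric] field_simps)
  from coupling_eq_coupling_real[OF this]
  have "coupling lam \<theta> ((1 / real N) *\<^sub>R (\<Sum>i<N. T (xs i)))
      = ereal (coupling_real lam ((\<Sum>i<N. \<theta> \<bullet> T (xs i)) / real N))"
    unfolding inner_mean .
  then show ?thesis
    using assms(1) by (simp add: right_diff_distrib)
qed

lemma sum_ln_qdens_le_surrogate:
  fixes T :: "'a \<Rightarrow> 'h::real_inner"
  assumes "phi lam M T \<theta> = ereal f" "N > 0" "\<And>i. i < N \<Longrightarrow> xs i \<in> supp lam T \<theta>" "lam \<ge> 0"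
  shows "ereal (\<Sum>i<N. ln (qdens lam M T \<theta> (xs i)))
       \<le> ereal (real N)
         * (coupling lam \<theta> ((1 / real N) *\<^sub>R (\<Sum>i<N. T (xs i))) - phi lam M T \<theta>)"
proof -
  have "(\<Sum>i<N. coupling_real lam (\<theta> \<bullet> T (xs i)))
      \<le> real N * coupling_real lam ((\<Sum>i<N. \<theta> \<bullet> T (xs i)) / real N)"
    using sum_coupling_real_le[of "{..<N}" lam "\<lambda>i. \<theta> \<bullet> T (xs i)"] assms(2-4)
    by (auto simp: supp_def)
  moreover have "(\<Sum>i<N. ln (qdens lam M T \<theta> (xs i)))
      = (\<Sum>i<N. coupling_real lam (\<theta> \<bullet> T (xs i))) - real N * f"
    using sum_ln_qdens[of lam M T \<theta> f "{..<N}" xs] assms(1,3) by simp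
  ultimately show ?thesis
    using assms(2,3) by (simp add: surrogate_at_mean[OF assms(1)])
qed

lemma surrogate_le_sum_ln_qdens:
  fixes T :: "'a \<Rightarrow> 'h::real_inner"
  assumes "phi lam M T \<theta> = ereal f" "N > 0" "\<And>i. i < N \<Longrightarrow> xs i \<in> supp lam T \<theta>" "lam \<le> 0"
  shows "ereal (real N)
         * (coupling lam \<theta> ((1 / real N) *\<^sub>R (\<Sum>i<N. T (xs i))) - phi lam M T \<theta>)
       \<le> ereal (\<Sum>i<N. ln (qdens lam M T \<theta> (xs i)))"
proof -
  have "real N * coupling_real lam ((\<Sum>i<N. \<theta> \<bullet> T (xs i)) / real N)
      \<le> (\<Sum>i<N. coupling_real lam (\<theta> \<bullet> T (xs i)))"
    using sum_coupling_real_ge[of "{..<N}" lam "\<lambda>i. \<theta> \<bullet> T (xs i)"] assms(2-4)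
    by (auto simp: supp_def)
  moreover have "(\<Sum>i<N. ln (qdens lam M T \<theta> (xs i)))
      = (\<Sum>i<N. coupling_real lam (\<theta> \<bullet> T (xs i))) - real N * f"
    using sum_ln_qdens[of lam M T \<theta> f "{..<N}" xs] assms(1,3) by simp
  ultimately show ?thesis
    using assms(2,3) by (simp add: surrogate_at_mean[OF assms(1)])
qed

section \<open>Maximality of the surrogate under moment matching\<close>

lemma integral_inner_of_expect:
  fixes T :: "'a \<Rightarrow> 'h::euclidean_space" and w :: "'a \<Rightarrow> real"
  assumes "\<And>b. b \<in> Basis \<Longrightarrow> integrable M (\<lambda>x. w x * (T x \<bullet> b))"
    and "expect M (\<lambda>x. w x / Z) T = Tb" and "Z \<noteq> 0"
  shows "integrable M (\<lambda>x. w x * (v \<bullet> T x))"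
    and "(\<integral>x. w x * (v \<bullet> T x) \<partial>M) = Z * (v \<bullet> Tb)"
proof -
  have "w x *\<^sub>R T x = (\<Sum>b\<in>Basis. (w x * (T x \<bullet> b)) *\<^sub>R b)" for x
    by (subst euclidean_representation[symmetric, of "T x"]) (simp add: scaleR_sum_right)
  then have wT: "integrable M (\<lambda>x. w x *\<^sub>R T x)"
    using assms(1) by (simp add: Bochner_Integration.integrable_sum)
  have inner: "w x * (v \<bullet> T x) = v \<bullet> (w x *\<^sub>R T x)" for x
    by simp
  show "integrable M (\<lambda>x. w x * (v \<bullet> T x))"
    unfolding inner using wT by (rule integrable_inner_right)
  have "expect M (\<lambda>x. w x / Z) T = (1 / Z) *\<^sub>R (\<integral>x. w x *\<^sub>R T x \<partial>M)"
    unfolding expect_def by (simp add: divide_inverse mult.commute flip: scaleR_scaleR)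
  then have "(\<integral>x. w x *\<^sub>R T x \<partial>M) = Z *\<^sub>R Tb"
    using assms(2,3) by simp
  then show "(\<integral>x. w x * (v \<bullet> T x) \<partial>M) = Z * (v \<bullet> Tb)"
    unfolding inner integral_inner_right[OF wT] by simp
qed

lemma powr_ge_tangent:
  fixes p y y0 :: real
  assumes "p \<ge> 1 \<or> p \<le> 0" and "y > 0" and "y0 > 0"
  shows "y0 powr p + p * y0 powr (p - 1) * (y - y0) \<le> y powr p"
proof -
  have "convex_on {0<..} (\<lambda>x::real. x powr p)"
  proof (rule f''_ge0_imp_convex)
    fix x :: real assume "x \<in> {0<..}"
    then show "((\<lambda>x. x powr p) has_real_derivative p * x powr (p - 1)) (at x)"
      and "((\<lambda>x. p * x powr (p - 1)) has_real_derivative p * (p - 1) * x powr (p - 2)) (at x)"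
      by (auto intro!: derivative_eq_intros simp: algebra_simps)
    have "p * (p - 1) \<ge> 0"
      using assms(1) by (auto simp: mult_nonpos_nonpos)
    then show "p * (p - 1) * x powr (p - 2) \<ge> 0"
      by simp
  qed simp
  then have "p * y0 powr (p - 1) * (y - y0) \<le> y powr p - y0 powr p"
    using assms(2,3)
    by (intro convex_on_imp_above_tangent) (auto simp: interior_open intro!: derivative_eq_intros)
  then show ?thesis
    by simp
qed

locale moment_matching =
  fixes lam :: real and M :: "'a measure" and T :: "'a \<Rightarrow> 'h::euclidean_space"
    and \<theta>s :: 'h and Tb :: 'h
  assumes T_meas [measurable]: "T \<in> borel_measurable M"
    and A: "assumption_A lam M T"
    and B: "assumption_B lam M T"
    and \<theta>s_dom: "\<theta>s \<in> dom_phi lam M T"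
    and moment: "expect M (escort (1 - lam) M (qdens lam M T \<theta>s)) T = Tb"
begin

lemma alpha_pos: "1 - lam > 0"
  using A by (simp add: assumption_A_def)

lemma phi_not_minf: "phi lam M T \<theta> \<noteq> -\<infinity>"
  using A by (simp add: assumption_A_def)

lemma supp_eq_supp_\<theta>s: "\<theta> \<in> dom_phi lam M T \<Longrightarrow> supp lam T \<theta> = supp lam T \<theta>s"
  using B \<theta>s_dom unfolding assumption_B_def by metis

lemmas integrable_eexp_coupling_dom = integrable_eexp_coupling[OF T_meas _ phi_not_minf]
lemmas partition_function_pos_dom = partition_function_pos[OF T_meas _ phi_not_minf]
lemmas phi_eq_ln_partition_function_dom = phi_eq_ln_partition_function[OF T_meas _ phi_not_minf]

lemma qdens_eq:
  "\<theta> \<in> dom_phi lam M T \<Longrightarrow>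
    qdens lam M T \<theta> x = eexp (coupling lam \<theta> (T x)) / partition_function lam M T \<theta>"
  by (intro qdens_eq_divide_partition_function phi_eq_ln_partition_function_dom
      partition_function_pos_dom)

definition escort_weight :: "'a \<Rightarrow> real" where
  "escort_weight x = qdens lam M T \<theta>s x powr (1 - lam)"

definition escort_mass :: real where
  "escort_mass = (\<integral>x. escort_weight x \<partial>M)"

lemma borel_measurable_escort_weight [measurable]: "escort_weight \<in> borel_measurable M"
  unfolding escort_weight_def qdens_eq[OF \<theta>s_dom] by measurable

lemma escort_weight_nonneg: "escort_weight x \<ge> 0"
  by (simp add: escort_weight_def)

lemma escort_mass_eq_nn_integral:
  "escort_mass = enn2real (\<integral>\<^sup>+ x. ennreal (escort_weight x) \<partial>M)"
  unfolding escort_mass_def by (rule integral_eq_nn_integral) (auto simp: escort_weight_nonneg)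

lemma compatible_escort_weight:
  shows "0 < (\<integral>\<^sup>+ x. ennreal (escort_weight x) \<partial>M)"
    and "(\<integral>\<^sup>+ x. ennreal (escort_weight x) \<partial>M) < \<infinity>"
    and "b \<in> Basis \<Longrightarrow> integrable M (\<lambda>x. escort_weight x * (T x \<bullet> b))"
proof -
  have "compatible lam M T (qdens lam M T \<theta>s) \<theta>s"
    using B \<theta>s_dom unfolding assumption_B_def family_compatible_def by blast
  then show "0 < (\<integral>\<^sup>+ x. ennreal (escort_weight x) \<partial>M)"
    and "(\<integral>\<^sup>+ x. ennreal (escort_weight x) \<partial>M) < \<infinity>"
    and "b \<in> Basis \<Longrightarrow> integrable M (\<lambda>x. escort_weight x * (T x \<bullet> b))"
    unfolding compatible_def Let_def restr_qdens_supp[OF phi_not_minf] escort_weight_def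
    by auto
qed

lemma integrable_escort_weight: "integrable M escort_weight"
  using compatible_escort_weight(2)
  by (intro integrableI_nn_integral_finite[where x=escort_mass])
     (auto simp: escort_mass_eq_nn_integral escort_weight_nonneg ennreal_enn2real less_top)

lemma escort_mass_pos: "escort_mass > 0"
  using compatible_escort_weight(1,2)
  by (simp add: escort_mass_eq_nn_integral enn2real_positive_iff less_top)

lemma escort_eq_escort_weight: "escort (1 - lam) M (qdens lam M T \<theta>s) = (\<lambda>x. escort_weight x / escort_mass)"
  unfolding escort_def escort_weight_def[symmetric] escort_mass_eq_nn_integral ..

lemma integral_escort_weight_inner:
  shows integrable_escort_weight_inner: "integrable M (\<lambda>x. escort_weight x * (v \<bullet> T x))"
    and "(\<integral>x. escort_weight x * (v \<bullet> T x) \<partial>M) = escort_mass * (v \<bullet> Tb)"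
  using integral_inner_of_expect[OF compatible_escort_weight(3), of escort_mass Tb]
    moment escort_mass_pos
  by (simp_all add: escort_eq_escort_weight)

lemma integral_escort_weight_affine:
  shows integrable_escort_weight_affine:
      "integrable M (\<lambda>x. escort_weight x * (1 + lam * (v \<bullet> T x)))"
    and "(\<integral>x. escort_weight x * (1 + lam * (v \<bullet> T x)) \<partial>M)
      = escort_mass * (1 + lam * (v \<bullet> Tb))"
proof -
  have affine: "escort_weight x * (1 + lam * (v \<bullet> T x))
      = escort_weight x + lam * (escort_weight x * (v \<bullet> T x))" for x
    by (simp add: algebra_simps)
  show "integrable M (\<lambda>x. escort_weight x * (1 + lam * (v \<bullet> T x)))"
    unfolding affine using integrable_escort_weight integrable_escort_weight_inner by simp
  show "(\<integral>x. escort_weight x * (1 + lam * (v \<bullet> T x)) \<partial>M)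
      = escort_mass * (1 + lam * (v \<bullet> Tb))"
    unfolding affine Bochner_Integration.integral_add[OF integrable_escort_weight
        integrable_mult_right[OF integrable_escort_weight_inner]]
      integral_mult_right_zero integral_escort_weight_inner(2) escort_mass_def[symmetric]
    by (simp add: algebra_simps)
qed

lemma partition_function_ge_exponential:
  assumes "lam = 0" and "\<theta> \<in> dom_phi lam M T"
  shows "exp ((\<theta> - \<theta>s) \<bullet> Tb) * partition_function lam M T \<theta>s \<le> partition_function lam M T \<theta>"
proof -
  define Zs where "Zs = partition_function lam M T \<theta>s"
  define t where "t = (\<theta> - \<theta>s) \<bullet> Tb"
  have Zs_pos: "Zs > 0"
    unfolding Zs_def using \<theta>s_dom by (rule partition_function_pos_dom)
  have g: "eexp (coupling lam \<eta> (T x)) = exp (\<eta> \<bullet> T x)" for \<eta> x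
    using assms(1) by (simp add: eexp_coupling)
  have weight: "escort_weight x = exp (\<theta>s \<bullet> T x) / Zs" for x
    unfolding escort_weight_def qdens_eq[OF \<theta>s_dom] g Zs_def[symmetric]
    using assms(1) Zs_pos by simp
  have tangent: "exp t * exp (\<theta>s \<bullet> T x)
      + exp t * Zs * (escort_weight x * ((\<theta> - \<theta>s) \<bullet> T x) - t * escort_weight x)
      \<le> exp (\<theta> \<bullet> T x)" for x
  proof -
    have "exp t * exp (\<theta>s \<bullet> T x)
        + exp t * Zs * (escort_weight x * ((\<theta> - \<theta>s) \<bullet> T x) - t * escort_weight x)
        = exp (\<theta>s \<bullet> T x + t) * (1 + ((\<theta> - \<theta>s) \<bullet> T x - t))"
      using Zs_pos by (simp add: weight exp_add field_simps)
    also have "\<dots> \<le> exp (\<theta>s \<bullet> T x + t) * exp ((\<theta> - \<theta>s) \<bullet> T x - t)"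
      by (intro mult_left_mono exp_ge_add_one_self) simp
    also have "\<dots> = exp (\<theta> \<bullet> T x)"
      by (simp add: inner_diff_left flip: exp_add)
    finally show ?thesis .
  qed
  have "(\<integral>x. exp t * exp (\<theta>s \<bullet> T x)
      + exp t * Zs * (escort_weight x * ((\<theta> - \<theta>s) \<bullet> T x) - t * escort_weight x) \<partial>M)
      \<le> (\<integral>x. exp (\<theta> \<bullet> T x) \<partial>M)"
    using tangent integrable_eexp_coupling_dom[OF \<theta>s_dom]
      integrable_eexp_coupling_dom[OF assms(2)] integrable_escort_weight integrable_escort_weight_inner
    by (intro integral_mono) (auto simp: g)
  also have "(\<integral>x. exp t * exp (\<theta>s \<bullet> T x)
      + exp t * Zs * (escort_weight x * ((\<theta> - \<theta>s) \<bullet> T x) - t * escort_weight x) \<partial>M)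
      = exp t * Zs"
    using integrable_eexp_coupling_dom[OF \<theta>s_dom] integrable_escort_weight integrable_escort_weight_inner
    by (simp add: g Zs_def partition_function_def integral_escort_weight_inner t_def
        flip: escort_mass_def)
  finally show ?thesis
    by (simp add: g partition_function_def t_def Zs_def)
qed

lemma escort_weight_deformed:
  assumes "lam \<noteq> 0"
  shows "escort_weight x = (if x \<in> supp lam T \<theta>s
    then (1 + lam * (\<theta>s \<bullet> T x)) powr (1 / lam - 1) * partition_function lam M T \<theta>s powr (lam - 1)
    else 0)"
proof -
  define u where "u = 1 + lam * (\<theta>s \<bullet> T x)"
  define Zs where "Zs = partition_function lam M T \<theta>s"
  have Zs_pos: "Zs > 0"
    unfolding Zs_def using \<theta>s_dom by (rule partition_function_pos_dom)
  have weight: "escort_weight x = (if u > 0 then (u powr (1 / lam) / Zs) powr (1 - lam) else 0)"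
    using assms by (simp add: escort_weight_def qdens_eq[OF \<theta>s_dom] eexp_coupling u_def Zs_def)
  have "(u powr (1 / lam) / Zs) powr (1 - lam) = u powr (1 / lam - 1) * Zs powr (lam - 1)"
    if "u > 0"
  proof -
    have "(u powr (1 / lam) / Zs) powr (1 - lam) = u powr (1 / lam * (1 - lam)) / Zs powr (1 - lam)"
      using that Zs_pos by (simp add: powr_divide powr_powr)
    also have "\<dots> = u powr (1 / lam - 1) * Zs powr (lam - 1)"
      using assms by (simp add: right_diff_distrib divide_inverse flip: powr_minus)
    finally show ?thesis .
  qed
  then show ?thesis
    by (simp add: weight supp_def u_def Zs_def)
qed

lemma escort_weight_mult_eexp_coupling:
  assumes "lam \<noteq> 0"
  shows "escort_weight x * (1 + lam * (\<theta>s \<bullet> T x))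
    = eexp (coupling lam \<theta>s (T x)) * partition_function lam M T \<theta>s powr (lam - 1)"
proof -
  have "u powr (1 / lam - 1) * u = u powr (1 / lam)" if "u > 0" for u :: real
    using that by (simp add: powr_diff)
  then show ?thesis
    using assms by (auto simp: escort_weight_deformed eexp_coupling supp_def)
qed

lemma escort_mass_deformed:
  assumes "lam \<noteq> 0"
  shows "escort_mass * (1 + lam * (\<theta>s \<bullet> Tb)) = partition_function lam M T \<theta>s powr lam"
proof -
  have Zs_pos: "partition_function lam M T \<theta>s > 0"
    using \<theta>s_dom by (rule partition_function_pos_dom)
  have "escort_mass * (1 + lam * (\<theta>s \<bullet> Tb))
      = (\<integral>x. eexp (coupling lam \<theta>s (T x)) * partition_function lam M T \<theta>s powr (lam - 1) \<partial>M)"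
    by (simp add: escort_weight_mult_eexp_coupling[OF assms] flip: integral_escort_weight_affine(2))
  also have "\<dots> = partition_function lam M T \<theta>s * partition_function lam M T \<theta>s powr (lam - 1)"
    by (simp add: partition_function_def)
  also have "\<dots> = partition_function lam M T \<theta>s powr lam"
    using Zs_pos by (simp add: powr_diff)
  finally show ?thesis .
qed

lemma one_add_lam_inner_Tb_pos: "1 + lam * (\<theta>s \<bullet> Tb) > 0"
proof (cases "lam = 0")
  case False
  have "escort_mass * (1 + lam * (\<theta>s \<bullet> Tb)) > 0"
    using partition_function_pos_dom[OF \<theta>s_dom] by (simp add: escort_mass_deformed[OF False])
  then show ?thesis
    using escort_mass_pos by (simp add: zero_less_mult_iff)
qed simp

lemma eexp_coupling_ge_tangent:
  assumes "lam \<noteq> 0" and "\<theta> \<in> dom_phi lam M T" and "t > 0"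
  shows "t powr (1 / lam) * eexp (coupling lam \<theta>s (T x))
      + 1 / lam * t powr (1 / lam - 1) * partition_function lam M T \<theta>s powr (1 - lam)
        * (escort_weight x * (1 + lam * (\<theta> \<bullet> T x))
           - t * (escort_weight x * (1 + lam * (\<theta>s \<bullet> T x))))
    \<le> eexp (coupling lam \<theta> (T x))"
proof (cases "x \<in> supp lam T \<theta>s")
  case True
  define p where "p = 1 / lam"
  define u where "u = 1 + lam * (\<theta> \<bullet> T x)"
  define us where "us = 1 + lam * (\<theta>s \<bullet> T x)"
  define Zs where "Zs = partition_function lam M T \<theta>s"
  have pos: "u > 0" "us > 0"
    using True supp_eq_supp_\<theta>s[OF assms(2)] by (auto simp: supp_def u_def us_def)
  have Zs_cancel: "Zs powr (1 - lam) * Zs powr (lam - 1) = 1"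
    using partition_function_pos_dom[OF \<theta>s_dom] by (simp add: Zs_def flip: powr_add)
  have p: "p \<ge> 1 \<or> p \<le> 0"
    using assms(1) alpha_pos by (cases "lam < 0") (auto simp: p_def)
  have "t powr p * us powr p + p * t powr (p - 1) * Zs powr (1 - lam)
        * (us powr (p - 1) * Zs powr (lam - 1) * u - t * (us powr (p - 1) * Zs powr (lam - 1) * us))
      = t powr p * us powr p + p * t powr (p - 1) * us powr (p - 1)
        * (Zs powr (1 - lam) * Zs powr (lam - 1)) * (u - t * us)"
    by (simp add: algebra_simps)
  also have "\<dots> = (t * us) powr p + p * (t * us) powr (p - 1) * (u - t * us)"
    using assms(3) pos by (simp add: powr_mult Zs_cancel)
  also have "\<dots> \<le> u powr p"
    using p pos assms(3) by (intro powr_ge_tangent) auto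
  finally show ?thesis
    using True pos assms(1)
    by (simp add: escort_weight_deformed eexp_coupling supp_def u_def us_def Zs_def p_def)
next
  case False
  moreover have "x \<notin> supp lam T \<theta>"
    using False supp_eq_supp_\<theta>s[OF assms(2)] by simp
  ultimately show ?thesis
    using assms(1) by (simp add: escort_weight_deformed eexp_coupling supp_def)
qed

lemma partition_function_ge_deformed:
  assumes "lam \<noteq> 0" and "\<theta> \<in> dom_phi lam M T" and "1 + lam * (\<theta> \<bullet> Tb) > 0"
  shows "((1 + lam * (\<theta> \<bullet> Tb)) / (1 + lam * (\<theta>s \<bullet> Tb))) powr (1 / lam)
      * partition_function lam M T \<theta>s
    \<le> partition_function lam M T \<theta>"
proof -
  define t where "t = (1 + lam * (\<theta> \<bullet> Tb)) / (1 + lam * (\<theta>s \<bullet> Tb))"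
  define C where "C = 1 / lam * t powr (1 / lam - 1) * partition_function lam M T \<theta>s powr (1 - lam)"
  have t_pos: "t > 0"
    using assms(3) one_add_lam_inner_Tb_pos by (simp add: t_def)
  have "(\<integral>x. t powr (1 / lam) * eexp (coupling lam \<theta>s (T x))
        + C * (escort_weight x * (1 + lam * (\<theta> \<bullet> T x))
               - t * (escort_weight x * (1 + lam * (\<theta>s \<bullet> T x)))) \<partial>M)
      \<le> (\<integral>x. eexp (coupling lam \<theta> (T x)) \<partial>M)"
    using eexp_coupling_ge_tangent[OF assms(1,2) t_pos] integrable_eexp_coupling_dom[OF \<theta>s_dom]
      integrable_eexp_coupling_dom[OF assms(2)] integrable_escort_weight_affine
    by (intro integral_mono) (auto simp: C_def)
  also have "(\<integral>x. t powr (1 / lam) * eexp (coupling lam \<theta>s (T x))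
        + C * (escort_weight x * (1 + lam * (\<theta> \<bullet> T x))
               - t * (escort_weight x * (1 + lam * (\<theta>s \<bullet> T x)))) \<partial>M)
      = t powr (1 / lam) * partition_function lam M T \<theta>s
        + C * (escort_mass * (1 + lam * (\<theta> \<bullet> Tb)) - t * (escort_mass * (1 + lam * (\<theta>s \<bullet> Tb))))"
    using integrable_eexp_coupling_dom[OF \<theta>s_dom] integrable_escort_weight_affine
    by (simp add: partition_function_def integral_escort_weight_affine)
  also have "\<dots> = t powr (1 / lam) * partition_function lam M T \<theta>s"
    using one_add_lam_inner_Tb_pos by (simp add: t_def)
  finally show ?thesis
    by (simp add: partition_function_def t_def)
qed

lemma surrogate_maximal:
  assumes "\<theta> \<in> dom_phi lam M T"
  shows "coupling lam \<theta> Tb - phi lam M T \<theta> \<le> coupling lam \<theta>s Tb - phi lam M T \<theta>s"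
proof -
  define Z where "Z = partition_function lam M T"
  have Z_pos: "Z \<theta> > 0" "Z \<theta>s > 0"
    using assms \<theta>s_dom by (simp_all add: Z_def partition_function_pos_dom)
  have phi: "phi lam M T \<theta> = ereal (ln (Z \<theta>))" "phi lam M T \<theta>s = ereal (ln (Z \<theta>s))"
    using assms \<theta>s_dom by (simp_all add: Z_def phi_eq_ln_partition_function_dom)
  have coupling_\<theta>s: "coupling lam \<theta>s Tb = ereal (coupling_real lam (\<theta>s \<bullet> Tb))"
    using one_add_lam_inner_Tb_pos by (rule coupling_eq_coupling_real)
  consider "lam = 0"
    | "lam \<noteq> 0" "1 + lam * (\<theta> \<bullet> Tb) \<le> 0"
    | "lam \<noteq> 0" "1 + lam * (\<theta> \<bullet> Tb) > 0"
    by linarith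
  then show ?thesis
  proof cases
    case 1
    have "ln (exp ((\<theta> - \<theta>s) \<bullet> Tb) * Z \<theta>s) \<le> ln (Z \<theta>)"
      using partition_function_ge_exponential[OF 1 assms] Z_pos by (simp add: Z_def)
    then show ?thesis
      unfolding phi using 1 Z_pos by (simp add: coupling_def ln_mult inner_diff_left)
  next
    case 2
    then show ?thesis
      by (simp add: phi coupling_def)
  next
    case 3
    have "ln (((1 + lam * (\<theta> \<bullet> Tb)) / (1 + lam * (\<theta>s \<bullet> Tb))) powr (1 / lam) * Z \<theta>s)
        \<le> ln (Z \<theta>)"
      using partition_function_ge_deformed[OF 3(1) assms 3(2)] Z_pos 3(2) one_add_lam_inner_Tb_pos
      by (simp add: Z_def)
    then show ?thesis
      using 3 Z_pos one_add_lam_inner_Tb_pos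
      by (simp add: phi coupling_\<theta>s coupling_eq_coupling_real coupling_real_def ln_mult ln_powr ln_div
          diff_divide_distrib)
  qed
qed

lemma psi_eq_surrogate:
  assumes "lam \<noteq> 0"
  shows "ereal (psi lam M T \<theta>s) = coupling lam \<theta>s Tb - phi lam M T \<theta>s"
proof -
  define Zs where "Zs = partition_function lam M T \<theta>s"
  define a where "a = 1 + lam * (\<theta>s \<bullet> Tb)"
  have pos: "Zs > 0" "a > 0" "escort_mass > 0"
    using partition_function_pos_dom[OF \<theta>s_dom] one_add_lam_inner_Tb_pos escort_mass_pos
    by (simp_all add: Zs_def a_def)
  have "ln (escort_mass * a) = ln (Zs powr lam)"
    using escort_mass_deformed[OF assms] by (simp add: Zs_def a_def)
  then have "ln escort_mass + ln a = lam * ln Zs"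
    using pos by (simp add: ln_mult ln_powr)
  moreover have "psi lam M T \<theta>s = - (ln escort_mass / lam)"
    using assms by (simp add: psi_def renyi_def escort_mass_eq_nn_integral escort_weight_def)
  ultimately have "psi lam M T \<theta>s = ln a / lam - ln Zs"
    using assms by (simp add: field_simps)
  then show ?thesis
    using pos assms
    by (simp add: a_def Zs_def coupling_eq_coupling_real coupling_real_def
        phi_eq_ln_partition_function_dom[OF \<theta>s_dom])
qed

end

theorem proposition10:
  fixes lam :: real and M :: "'a measure" and T :: "'a \<Rightarrow> 'h::euclidean_space"
    and N :: nat and xs :: "nat \<Rightarrow> 'a" and \<theta>s :: 'h
  defines "Tbar \<equiv> (1 / real N) *\<^sub>R (\<Sum>i<N. T (xs i))"
    and "ell \<equiv> (\<lambda>\<theta>. \<Sum>i<N. ln (qdens lam M T \<theta> (xs i)))"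
    and "F \<equiv> (\<lambda>\<theta>. ereal (real N) * (coupling lam \<theta> ((1 / real N) *\<^sub>R (\<Sum>i<N. T (xs i))) - phi lam M T \<theta>))"
  assumes T_meas: "T \<in> borel_measurable M"
    and alpha_pos: "1 - lam > 0"
    and A: "assumption_A lam M T"
    and B: "assumption_B lam M T"
    and N_pos: "N > 0"
    and data: "\<forall>i<N. xs i \<in> space M"
    and data_supp: "\<forall>i<N. \<forall>\<theta>\<in>dom_phi lam M T. xs i \<in> supp lam T \<theta>"
    and \<theta>s_dom: "\<theta>s \<in> dom_phi lam M T"
    and moment: "expect M (escort (1 - lam) M (qdens lam M T \<theta>s)) T = Tbar"
  shows "(lam = 0 \<longrightarrow> (\<forall>\<theta>\<in>dom_phi lam M T. ell \<theta> \<le> ell \<theta>s))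
       \<and> (lam < 0 \<longrightarrow>
            (\<forall>\<theta>\<in>dom_phi lam M T. F \<theta> \<le> F \<theta>s) \<and>
            (\<forall>\<theta>\<in>dom_phi lam M T. F \<theta> \<le> ereal (ell \<theta>)) \<and>
            ell \<theta>s / real N \<ge> psi lam M T \<theta>s)
       \<and> (lam > 0 \<longrightarrow>
            (\<forall>\<theta>\<in>dom_phi lam M T. F \<theta> \<le> F \<theta>s) \<and>
            (\<forall>\<theta>\<in>dom_phi lam M T. ereal (ell \<theta>) \<le> F \<theta>) \<and>
            (\<forall>\<theta>\<in>dom_phi lam M T. ell \<theta> / real N \<le> psi lam M T \<theta>s))"
proof -
  interpret moment_matching lam M T \<theta>s Tbar
    using T_meas A B \<theta>s_dom moment by unfold_locales
  have F_le: "F \<theta> \<le> F \<theta>s" if "\<theta> \<in> dom_phi lam M T" for \<theta>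
    unfolding F_def Tbar_def[symmetric] using surrogate_maximal[OF that]
    by (simp add: ereal_mult_left_mono)
  have ell_le_F: "ereal (ell \<theta>) \<le> F \<theta>" if "\<theta> \<in> dom_phi lam M T" "lam \<ge> 0" for \<theta>
    unfolding ell_def F_def using data_supp that
    by (intro sum_ln_qdens_le_surrogate[OF phi_eq_ln_partition_function_dom N_pos]) auto
  have F_le_ell: "F \<theta> \<le> ereal (ell \<theta>)" if "\<theta> \<in> dom_phi lam M T" "lam \<le> 0" for \<theta>
    unfolding ell_def F_def using data_supp that
    by (intro surrogate_le_sum_ln_qdens[OF phi_eq_ln_partition_function_dom N_pos]) auto
  have F_\<theta>s: "F \<theta>s = ereal (real N * psi lam M T \<theta>s)" if "lam \<noteq> 0"
    unfolding F_def Tbar_def[symmetric] psi_eq_surrogate[OF that, symmetric] by simp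
  show ?thesis
  proof (intro conjI impI ballI)
    show "ell \<theta> \<le> ell \<theta>s" if "lam = 0" "\<theta> \<in> dom_phi lam M T" for \<theta>
      using ell_le_F[OF that(2)] F_le[OF that(2)] F_le_ell[OF \<theta>s_dom] that(1)
      by (metis ereal_less_eq(3) order.trans order_refl)
    show "psi lam M T \<theta>s \<le> ell \<theta>s / real N" if "lam < 0"
      using F_\<theta>s F_le_ell[OF \<theta>s_dom] N_pos that by (simp add: field_simps)
    show "ell \<theta> / real N \<le> psi lam M T \<theta>s" if "lam > 0" "\<theta> \<in> dom_phi lam M T" for \<theta>
    proof -
      have "ereal (ell \<theta>) \<le> ereal (real N * psi lam M T \<theta>s)"
        using order.trans[OF ell_le_F[OF that(2)] F_le[OF that(2)]] F_\<theta>s that(1) by simp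
      then show ?thesis
        using N_pos by (simp add: field_simps)
    qed
  qed (auto intro: F_le F_le_ell ell_le_F)
qed

end
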